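(* Let $\mathcal{X}$ be a finite set, $\pi$ a probability mass function on $\mathcal{X}$ with full support, and $P$ an ergodic $\pi$-reversible transition matrix. Let a group $\mathcal{G}$ act on $\mathcal{X}$ and let $G$ and $M$ be the Gibbs and Metropolis–Hastings orbit kernels for this same action. Let $\theta:=\|M-G\|_{\ell^2_0(\pi)\to\ell^2_0(\pi)}$. Then $0\le\rho(MPM)-\rho(GPG)\le\rho(P)(2\theta+\theta^2)$.
   Context: $\langle f,g\rangle_\pi=\sum_x f(x)g(x)\pi(x)$, $\ell^2_0(\pi)=\{f:\sum_xf(x)\pi(x)=0\}$, with operator norm taken with respect to $\|\cdot\|_\pi$. With $\mathcal{O}(x)$ the orbit of $x$: $G(x,y)=\pi(y)/\pi(\mathcal{O}(x))$ for $y\in\mathcal{O}(x)$, else $0$; $M(x,y)=\frac{1}{|\mathcal{O}(x)|-1}\min\{1,\pi(y)/\pi(x)\}$ for $y\in\mathcal{O}(x)\setminus\{x\}$, $0$ off the orbit, $M(x,x)=1-\sum_{y\ne x}M(x,y)$. For a $\pi$-self-adjoint kernel $K$, $\rho(K)=\sup_{0\ne f\in\ell^2_0(\pi)}|\langle f,Kf\rangle_\pi|/\langle f,f\rangle_\pi$ (the second-largest eigenvalue in modulus). Equivalently, $\theta$ is the largest absolute value of an eigenvalue of $M$ restricted to the orthogonal complement in $\ell^2(\pi)$ of the functions constant on orbits. *)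

theory Defs
  imports "HOL-Analysis.Analysis" "HOL-Algebra.Group_Action"
begin

definition kmul :: "('x::finite \<Rightarrow> 'x \<Rightarrow> real) \<Rightarrow> ('x \<Rightarrow> 'x \<Rightarrow> real) \<Rightarrow> 'x \<Rightarrow> 'x \<Rightarrow> real"
  where "kmul K L x z = (\<Sum>y\<in>UNIV. K x y * L y z)"

definition kapply :: "('x::finite \<Rightarrow> 'x \<Rightarrow> real) \<Rightarrow> ('x \<Rightarrow> real) \<Rightarrow> 'x \<Rightarrow> real"
  where "kapply K f x = (\<Sum>y\<in>UNIV. K x y * f y)"

fun kpow :: "('x::finite \<Rightarrow> 'x \<Rightarrow> real) \<Rightarrow> nat \<Rightarrow> 'x \<Rightarrow> 'x \<Rightarrow> real" where
  "kpow K 0 = (\<lambda>x y. if x = y then 1 else 0)"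
| "kpow K (Suc n) = kmul (kpow K n) K"

definition pmf_full :: "('x::finite \<Rightarrow> real) \<Rightarrow> bool"
  where "pmf_full \<pi> \<longleftrightarrow> (\<forall>x. \<pi> x > 0) \<and> (\<Sum>x\<in>UNIV. \<pi> x) = 1"

definition stochastic :: "('x::finite \<Rightarrow> 'x \<Rightarrow> real) \<Rightarrow> bool"
  where "stochastic P \<longleftrightarrow> (\<forall>x y. P x y \<ge> 0) \<and> (\<forall>x. (\<Sum>y\<in>UNIV. P x y) = 1)"

definition reversible :: "('x::finite \<Rightarrow> real) \<Rightarrow> ('x \<Rightarrow> 'x \<Rightarrow> real) \<Rightarrow> bool"
  where "reversible \<pi> P \<longleftrightarrow> (\<forall>x y. \<pi> x * P x y = \<pi> y * P y x)"

definition irreducible :: "('x::finite \<Rightarrow> 'x \<Rightarrow> real) \<Rightarrow> bool"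
  where "irreducible P \<longleftrightarrow> (\<forall>x y. \<exists>n. kpow P n x y > 0)"

definition period :: "('x::finite \<Rightarrow> 'x \<Rightarrow> real) \<Rightarrow> 'x \<Rightarrow> nat"
  where "period P x = Gcd {n. n > 0 \<and> kpow P n x x > 0}"

definition aperiodic :: "('x::finite \<Rightarrow> 'x \<Rightarrow> real) \<Rightarrow> bool"
  where "aperiodic P \<longleftrightarrow> (\<forall>x. period P x = 1)"

definition ergodic :: "('x::finite \<Rightarrow> 'x \<Rightarrow> real) \<Rightarrow> bool"
  where "ergodic P \<longleftrightarrow> irreducible P \<and> aperiodic P"

definition inner_pi :: "('x::finite \<Rightarrow> real) \<Rightarrow> ('x \<Rightarrow> real) \<Rightarrow> ('x \<Rightarrow> real) \<Rightarrow> real"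
  where "inner_pi \<pi> f g = (\<Sum>x\<in>UNIV. f x * g x * \<pi> x)"

definition l2_0 :: "('x::finite \<Rightarrow> real) \<Rightarrow> ('x \<Rightarrow> real) set"
  where "l2_0 \<pi> = {f. (\<Sum>x\<in>UNIV. f x * \<pi> x) = 0}"

definition opnorm_l2_0 :: "('x::finite \<Rightarrow> real) \<Rightarrow> ('x \<Rightarrow> 'x \<Rightarrow> real) \<Rightarrow> real"
  where "opnorm_l2_0 \<pi> K = Sup (insert 0
     {sqrt (inner_pi \<pi> (kapply K f) (kapply K f)) / sqrt (inner_pi \<pi> f f) | f. f \<in> l2_0 \<pi> \<and> f \<noteq> (\<lambda>_. 0)})"

definition rho :: "('x::finite \<Rightarrow> real) \<Rightarrow> ('x \<Rightarrow> 'x \<Rightarrow> real) \<Rightarrow> real"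
  where "rho \<pi> K = Sup (insert 0
     {\<bar>inner_pi \<pi> f (kapply K f)\<bar> / inner_pi \<pi> f f | f. f \<in> l2_0 \<pi> \<and> f \<noteq> (\<lambda>_. 0)})"

definition gibbs_kernel :: "('x::finite \<Rightarrow> real) \<Rightarrow> ('x \<Rightarrow> 'x set) \<Rightarrow> 'x \<Rightarrow> 'x \<Rightarrow> real"
  where "gibbs_kernel \<pi> Orb x y = (if y \<in> Orb x then \<pi> y / (\<Sum>z\<in>Orb x. \<pi> z) else 0)"

definition mh_kernel :: "('x::finite \<Rightarrow> real) \<Rightarrow> ('x \<Rightarrow> 'x set) \<Rightarrow> 'x \<Rightarrow> 'x \<Rightarrow> real"
  where "mh_kernel \<pi> Orb x y =
     (if y \<in> Orb x \<and> y \<noteq> x then (1 / (real (card (Orb x)) - 1)) * min 1 (\<pi> y / \<pi> x)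
      else if y = x then 1 - (\<Sum>z\<in>Orb x - {x}. (1 / (real (card (Orb x)) - 1)) * min 1 (\<pi> z / \<pi> x))
      else 0)"

end

(*
  G is the pi-orthogonal projection onto the functions constant on orbits, and M, being
  supported on orbits with unit row sums, fixes its range: MG = G.  All kernels involved are
  pi-self-adjoint, so <f, GPG f> = <Gf, MPM Gf> with |Gf| <= |f|, which gives
  rho(GPG) <= rho(MPM).  Conversely, write Mf = Gf + (M - G)f with |(M - G)f| <= theta |f| and
  expand <Mf, P Mf>: the term <Gf, P Gf> = <f, GPG f> is bounded by rho(GPG) |f|^2, and the three
  cross terms by rho(P) (2 theta + theta^2) |f|^2, because polarization turns the quadratic bound
  defining rho(P) into |<u, P v>| <= rho(P) |u| |v| on l2_0(pi).
*)

theory Submission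
  imports Defs
begin

definition norm_pi :: "('x::finite \<Rightarrow> real) \<Rightarrow> ('x \<Rightarrow> real) \<Rightarrow> real"
  where "norm_pi \<pi> f = sqrt (inner_pi \<pi> f f)"

lemma kapply_kmul: "kapply (kmul K L) f = kapply K (kapply L f)"
  unfolding kapply_def kmul_def
  by (auto simp: sum_distrib_left sum_distrib_right mult.assoc intro!: ext sum.swap[THEN trans])

lemma kapply_add: "kapply K (\<lambda>x. f x + g x) = (\<lambda>x. kapply K f x + kapply K g x)"
  unfolding kapply_def by (simp add: algebra_simps sum.distrib)

lemma kapply_diff: "kapply K (\<lambda>x. f x - g x) = (\<lambda>x. kapply K f x - kapply K g x)"
  unfolding kapply_def by (simp add: algebra_simps sum_subtractf)

lemma kapply_scale: "kapply K (\<lambda>x. c * f x) = (\<lambda>x. c * kapply K f x)"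
  unfolding kapply_def by (simp add: algebra_simps sum_distrib_left)

lemma kapply_kernel_diff: "kapply (\<lambda>x y. K x y - L x y) f = (\<lambda>x. kapply K f x - kapply L f x)"
  unfolding kapply_def by (simp add: algebra_simps sum_subtractf)

lemma inner_pi_commute: "inner_pi \<pi> f g = inner_pi \<pi> g f"
  unfolding inner_pi_def by (simp add: mult.commute mult.left_commute)

lemma inner_pi_add_left: "inner_pi \<pi> (\<lambda>x. f x + g x) h = inner_pi \<pi> f h + inner_pi \<pi> g h"
  unfolding inner_pi_def by (simp add: algebra_simps sum.distrib)

lemma inner_pi_add_right: "inner_pi \<pi> h (\<lambda>x. f x + g x) = inner_pi \<pi> h f + inner_pi \<pi> h g"
  unfolding inner_pi_def by (simp add: algebra_simps sum.distrib)

lemma inner_pi_diff_left: "inner_pi \<pi> (\<lambda>x. f x - g x) h = inner_pi \<pi> f h - inner_pi \<pi> g h"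
  unfolding inner_pi_def by (simp add: algebra_simps sum_subtractf)

lemma inner_pi_diff_right: "inner_pi \<pi> h (\<lambda>x. f x - g x) = inner_pi \<pi> h f - inner_pi \<pi> h g"
  unfolding inner_pi_def by (simp add: algebra_simps sum_subtractf)

lemma inner_pi_scale_left: "inner_pi \<pi> (\<lambda>x. c * f x) h = c * inner_pi \<pi> f h"
  unfolding inner_pi_def by (simp add: algebra_simps sum_distrib_left)

lemma inner_pi_scale_right: "inner_pi \<pi> h (\<lambda>x. c * f x) = c * inner_pi \<pi> h f"
  unfolding inner_pi_def by (simp add: algebra_simps sum_distrib_left)

lemma inner_pi_parallelogram:
  "inner_pi \<pi> (\<lambda>x. f x + g x) (\<lambda>x. f x + g x) + inner_pi \<pi> (\<lambda>x. f x - g x) (\<lambda>x. f x - g x)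
     = 2 * (inner_pi \<pi> f f + inner_pi \<pi> g g)"
  by (simp add: inner_pi_add_left inner_pi_add_right inner_pi_diff_left inner_pi_diff_right)

lemma l2_0_add: "f \<in> l2_0 \<pi> \<Longrightarrow> g \<in> l2_0 \<pi> \<Longrightarrow> (\<lambda>x. f x + g x) \<in> l2_0 \<pi>"
  unfolding l2_0_def by (simp add: algebra_simps sum.distrib)

lemma l2_0_diff: "f \<in> l2_0 \<pi> \<Longrightarrow> g \<in> l2_0 \<pi> \<Longrightarrow> (\<lambda>x. f x - g x) \<in> l2_0 \<pi>"
  unfolding l2_0_def by (simp add: algebra_simps sum_subtractf)

lemma l2_0_scale: "f \<in> l2_0 \<pi> \<Longrightarrow> (\<lambda>x. c * f x) \<in> l2_0 \<pi>"
  unfolding l2_0_def by (simp add: mult.assoc sum_distrib_left[symmetric])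

lemma reversible_inner_pi_kapply:
  assumes "reversible \<pi> K"
  shows "inner_pi \<pi> f (kapply K g) = inner_pi \<pi> (kapply K f) g"
proof -
  have "inner_pi \<pi> f (kapply K g) = (\<Sum>x\<in>UNIV. \<Sum>y\<in>UNIV. f x * g y * (\<pi> x * K x y))"
    unfolding inner_pi_def kapply_def
    by (simp add: sum_distrib_left sum_distrib_right algebra_simps)
  also have "\<dots> = (\<Sum>y\<in>UNIV. \<Sum>x\<in>UNIV. f x * g y * (\<pi> y * K y x))"
    using assms unfolding reversible_def by (subst sum.swap) simp
  also have "\<dots> = inner_pi \<pi> (kapply K f) g"
    unfolding inner_pi_def kapply_def
    by (simp add: sum_distrib_left sum_distrib_right algebra_simps)
  finally show ?thesis .
qed

lemma reversible_inner_pi_sandwich: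
  assumes "reversible \<pi> K"
  shows "inner_pi \<pi> f (kapply (kmul (kmul K P) K) f) = inner_pi \<pi> (kapply K f) (kapply P (kapply K f))"
  by (simp add: kapply_kmul reversible_inner_pi_kapply[OF assms])

lemma reversible_inner_pi_polarization:
  assumes "reversible \<pi> K"
  shows "4 * inner_pi \<pi> f (kapply K g)
     = inner_pi \<pi> (\<lambda>x. f x + g x) (kapply K (\<lambda>x. f x + g x))
     - inner_pi \<pi> (\<lambda>x. f x - g x) (kapply K (\<lambda>x. f x - g x))"
  using reversible_inner_pi_kapply[OF assms, of g f] inner_pi_commute[of \<pi> "kapply K g" f]
  by (simp add: kapply_add kapply_diff inner_pi_add_left inner_pi_add_right
      inner_pi_diff_left inner_pi_diff_right)

lemma reversible_kapply_l2_0: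
  assumes "reversible \<pi> K" and "\<And>x. (\<Sum>y\<in>UNIV. K x y) = c" and "f \<in> l2_0 \<pi>"
  shows "kapply K f \<in> l2_0 \<pi>"
proof -
  have row: "kapply K (\<lambda>_. 1) = (\<lambda>_. c)"
    using assms(2) by (intro ext) (simp add: kapply_def)
  have "(\<Sum>x\<in>UNIV. kapply K f x * \<pi> x) = inner_pi \<pi> (\<lambda>_. 1) (kapply K f)"
    unfolding inner_pi_def by (simp add: mult.commute)
  also have "\<dots> = inner_pi \<pi> (\<lambda>_. c) f"
    using reversible_inner_pi_kapply[OF assms(1)] row by metis
  also have "\<dots> = 0"
    using assms(3) by (simp add: inner_pi_def l2_0_def mult.assoc sum_distrib_left[symmetric])
  finally show ?thesis
    unfolding l2_0_def by simp
qed

lemma sum_UNIV_if_mem: "(\<Sum>y\<in>(UNIV::'x::finite set). if y \<in> B then g y else 0) = sum g B"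
  using sum.inter_restrict[of "UNIV::'x set" g B] by simp

locale orbit_kernels =
  fixes \<pi> :: "'x::finite \<Rightarrow> real" and Orb :: "'x \<Rightarrow> 'x set"
  assumes pi_pos: "\<And>x. 0 < \<pi> x"
    and orbit_self: "\<And>x. x \<in> Orb x"
    and orbit_eq: "\<And>x y. y \<in> Orb x \<Longrightarrow> Orb y = Orb x"
begin

lemma orbit_sym: "y \<in> Orb x \<Longrightarrow> x \<in> Orb y"
  using orbit_eq[of y x] orbit_self[of x] by simp

lemma orbit_weight_pos: "0 < (\<Sum>z\<in>Orb x. \<pi> z)"
  using orbit_self[of x] pi_pos by (intro sum_pos2[of _ x]) (auto intro: less_imp_le)

lemma gibbs_kernel_row_sum: "(\<Sum>y\<in>UNIV. gibbs_kernel \<pi> Orb x y) = 1"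
proof -
  have "(\<Sum>y\<in>UNIV. gibbs_kernel \<pi> Orb x y) = (\<Sum>y\<in>Orb x. \<pi> y / (\<Sum>z\<in>Orb x. \<pi> z))"
    unfolding gibbs_kernel_def by (rule sum_UNIV_if_mem)
  also have "\<dots> = 1"
    using orbit_weight_pos[of x] by (simp add: sum_divide_distrib[symmetric])
  finally show ?thesis .
qed

lemma reversible_gibbs_kernel: "reversible \<pi> (gibbs_kernel \<pi> Orb)"
  unfolding reversible_def gibbs_kernel_def
  using orbit_sym orbit_eq by (auto simp: mult.commute)

lemma kmul_gibbs_kernel:
  assumes "\<And>x y. K x y \<noteq> 0 \<Longrightarrow> y \<in> Orb x" and "\<And>x. (\<Sum>y\<in>UNIV. K x y) = 1"
  shows "kmul K (gibbs_kernel \<pi> Orb) = gibbs_kernel \<pi> Orb"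
proof (intro ext)
  fix x z
  \<comment> \<open>the Gibbs kernel is constant in its first argument along orbits\<close>
  have "kmul K (gibbs_kernel \<pi> Orb) x z = (\<Sum>y\<in>UNIV. K x y * gibbs_kernel \<pi> Orb x z)"
    unfolding kmul_def gibbs_kernel_def using assms(1) orbit_eq by (intro sum.cong) fastforce+
  also have "\<dots> = gibbs_kernel \<pi> Orb x z"
    using assms(2)[of x] by (simp add: sum_distrib_right[symmetric])
  finally show "kmul K (gibbs_kernel \<pi> Orb) x z = gibbs_kernel \<pi> Orb x z" .
qed

lemma gibbs_kernel_idem: "kmul (gibbs_kernel \<pi> Orb) (gibbs_kernel \<pi> Orb) = gibbs_kernel \<pi> Orb"
  by (rule kmul_gibbs_kernel[OF _ gibbs_kernel_row_sum]) (simp add: gibbs_kernel_def split: if_splits)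

lemma mh_kernel_row_sum: "(\<Sum>y\<in>UNIV. mh_kernel \<pi> Orb x y) = 1"
proof -
  define q where "q y = 1 / (real (card (Orb x)) - 1) * min 1 (\<pi> y / \<pi> x)" for y
  have "(\<Sum>y\<in>UNIV - {x}. mh_kernel \<pi> Orb x y) = (\<Sum>y\<in>UNIV. if y \<in> Orb x - {x} then q y else 0)"
    unfolding mh_kernel_def q_def by (intro sum.mono_neutral_cong_left) auto
  also have "\<dots> = (\<Sum>y\<in>Orb x - {x}. q y)"
    by (rule sum_UNIV_if_mem)
  finally have "(\<Sum>y\<in>UNIV - {x}. mh_kernel \<pi> Orb x y) = 1 - mh_kernel \<pi> Orb x x"
    unfolding mh_kernel_def q_def by simp
  then show ?thesis
    by (simp add: sum.remove[of UNIV x])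
qed

lemma reversible_mh_kernel: "reversible \<pi> (mh_kernel \<pi> Orb)"
  unfolding reversible_def
proof (intro allI)
  fix x y
  have "\<pi> x * min 1 (\<pi> y / \<pi> x) = \<pi> y * min 1 (\<pi> x / \<pi> y)"
    using pi_pos[of x] pi_pos[of y] by (simp add: min_mult_distrib_left min.commute)
  then show "\<pi> x * mh_kernel \<pi> Orb x y = \<pi> y * mh_kernel \<pi> Orb y x"
    unfolding mh_kernel_def using orbit_sym orbit_eq by (auto simp: mult.left_commute)
qed

lemma kmul_mh_gibbs_kernel: "kmul (mh_kernel \<pi> Orb) (gibbs_kernel \<pi> Orb) = gibbs_kernel \<pi> Orb"
  by (rule kmul_gibbs_kernel[OF _ mh_kernel_row_sum]) (auto simp: mh_kernel_def orbit_self split: if_splits)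

end

lemma orbit_kernels_group_action:
  assumes "group_action G UNIV \<phi>" and "\<And>x. 0 < \<pi> x"
  shows "orbit_kernels \<pi> (orbit G \<phi>)"
proof
  interpret group_action G UNIV \<phi>
    by (rule assms(1))
  show "x \<in> orbit G \<phi> x" for x
    by (simp add: orbit_refl)
  show "orbit G \<phi> y = orbit G \<phi> x" if "y \<in> orbit G \<phi> x" for x y
    using that orbit_sym[of x y] orbit_trans[of x y] orbit_trans[of y x] by blast
qed (rule assms(2))

lemma two_mult_add_square_le:
  fixes a b c t :: real
  assumes "0 \<le> a" and "0 \<le> b" and "0 \<le> t" and "a \<le> c" and "b \<le> t * c"
  shows "2 * (a * b) + b * b \<le> (2 * t + t^2) * (c * c)"
proof -
  have "a * b \<le> c * (t * c)" and "b * b \<le> (t * c) * (t * c)"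
    using assms by (auto intro!: mult_mono)
  then show ?thesis
    by (simp add: algebra_simps power2_eq_square)
qed

lemma bdd_above_ratio:
  fixes F N :: "'f \<Rightarrow> real"
  assumes "\<And>g. Q g \<Longrightarrow> 0 < N g" and "\<And>g. Q g \<Longrightarrow> F g \<le> C * N g"
  shows "bdd_above (insert 0 {F g / N g | g. Q g})"
proof (rule bdd_aboveI)
  fix v
  assume "v \<in> insert 0 {F g / N g | g. Q g}"
  then consider "v = 0" | g where "Q g" "v = F g / N g"
    by blast
  then show "v \<le> max C 0"
  proof cases
    case 2
    then have "v \<le> C"
      using assms[OF \<open>Q g\<close>] by (simp add: divide_le_eq)
    then show ?thesis
      by simp
  qed simp
qed

lemma cSup_ratio_upper:
  fixes F N :: "'f \<Rightarrow> real"
  assumes "\<And>g. Q g \<Longrightarrow> 0 < N g" and "\<And>g. Q g \<Longrightarrow> F g \<le> C * N g" and "Q f"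
  shows "F f \<le> Sup (insert 0 {F g / N g | g. Q g}) * N f"
proof -
  have "bdd_above (insert 0 {F g / N g | g. Q g})"
    using assms(1,2) by (rule bdd_above_ratio)
  then have "F f / N f \<le> Sup (insert 0 {F g / N g | g. Q g})"
    using assms(3) by (intro cSup_upper) auto
  then show ?thesis
    using assms(1,3) by (simp add: divide_le_eq)
qed

lemma cSup_ratio_least:
  fixes F N :: "'f \<Rightarrow> real"
  assumes "\<And>g. Q g \<Longrightarrow> 0 < N g" and "\<And>g. Q g \<Longrightarrow> F g \<le> r * N g" and "0 \<le> r"
  shows "Sup (insert 0 {F g / N g | g. Q g}) \<le> r"
proof (rule cSup_least)
  fix v
  assume "v \<in> insert 0 {F g / N g | g. Q g}"
  then consider "v = 0" | g where "Q g" "v = F g / N g"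
    by blast
  then show "v \<le> r"
  proof cases
    case 2
    then show ?thesis
      using assms(1,2)[OF \<open>Q g\<close>] by (simp add: divide_le_eq)
  qed (use assms(3) in simp)
qed simp

lemma cSup_ratio_nonneg:
  fixes F N :: "'f \<Rightarrow> real"
  assumes "\<And>g. Q g \<Longrightarrow> 0 < N g" and "\<And>g. Q g \<Longrightarrow> F g \<le> C * N g"
  shows "0 \<le> Sup (insert 0 {F g / N g | g. Q g})"
  using bdd_above_ratio[OF assms] by (intro cSup_upper) auto

context
  fixes \<pi> :: "'x::finite \<Rightarrow> real"
  assumes pi_pos: "\<And>x. 0 < \<pi> x"
begin

lemma mult_self_weight_nonneg: "0 \<le> f x * f x * \<pi> x"
  using pi_pos[of x] by simp

lemma inner_pi_self_nonneg: "0 \<le> inner_pi \<pi> f f"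
  unfolding inner_pi_def by (intro sum_nonneg mult_self_weight_nonneg)

lemma inner_pi_self_eq_0_iff: "inner_pi \<pi> f f = 0 \<longleftrightarrow> f = (\<lambda>_. 0)"
proof
  assume "inner_pi \<pi> f f = 0"
  then have "f x * f x * \<pi> x = 0" for x
    unfolding inner_pi_def using sum_nonneg_eq_0_iff[of UNIV "\<lambda>x. f x * f x * \<pi> x"]
    by (simp add: mult_self_weight_nonneg)
  then show "f = (\<lambda>_. 0)"
    using pi_pos by (simp add: less_imp_neq[symmetric] fun_eq_iff)
qed (simp add: inner_pi_def)

lemma inner_pi_self_pos: "f \<noteq> (\<lambda>_. 0) \<Longrightarrow> 0 < inner_pi \<pi> f f"
  using inner_pi_self_nonneg[of f] inner_pi_self_eq_0_iff[of f] by linarith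

lemma norm_pi_nonneg: "0 \<le> norm_pi \<pi> f"
  unfolding norm_pi_def using inner_pi_self_nonneg by simp

lemma norm_pi_mult_self: "norm_pi \<pi> f * norm_pi \<pi> f = inner_pi \<pi> f f"
  unfolding norm_pi_def using inner_pi_self_nonneg by simp

lemma inner_pi_kapply_adjoint:
  "inner_pi \<pi> (kapply K f) g = inner_pi \<pi> f (kapply (\<lambda>x y. \<pi> y * K y x / \<pi> x) g)"
proof -
  have "inner_pi \<pi> (kapply K f) g = (\<Sum>x\<in>UNIV. \<Sum>y\<in>UNIV. f y * g x * (\<pi> x * K x y))"
    unfolding inner_pi_def kapply_def by (simp add: sum_distrib_left sum_distrib_right algebra_simps)
  also have "\<dots> = (\<Sum>y\<in>UNIV. \<Sum>x\<in>UNIV. f y * g x * (\<pi> x * K x y))"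
    by (rule sum.swap)
  also have "\<dots> = inner_pi \<pi> f (kapply (\<lambda>x y. \<pi> y * K y x / \<pi> x) g)"
    unfolding inner_pi_def kapply_def using pi_pos
    by (simp add: sum_distrib_left sum_distrib_right algebra_simps less_imp_neq[symmetric])
  finally show ?thesis .
qed

lemma abs_mult_le_inner_pi: "\<bar>f y * f z\<bar> \<le> inner_pi \<pi> f f / Min (range \<pi>)"
proof -
  have m: "0 < Min (range \<pi>)"
    using pi_pos by simp
  have square: "Min (range \<pi>) * (f y * f y) \<le> inner_pi \<pi> f f" for y
  proof -
    have "Min (range \<pi>) * (f y * f y) \<le> f y * f y * \<pi> y"
      by (simp add: mult.commute mult_right_mono)
    also have "\<dots> \<le> inner_pi \<pi> f f"
      unfolding inner_pi_def by (intro member_le_sum mult_self_weight_nonneg) simp_all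
    finally show ?thesis .
  qed
  have am_gm: "2 * \<bar>f y * f z\<bar> \<le> f y * f y + f z * f z"
    using sum_squares_bound[of "\<bar>f y\<bar>" "\<bar>f z\<bar>"] by (simp add: abs_mult power2_eq_square)
  have "2 * (Min (range \<pi>) * \<bar>f y * f z\<bar>)
      \<le> Min (range \<pi>) * (f y * f y) + Min (range \<pi>) * (f z * f z)"
    using mult_left_mono[OF am_gm less_imp_le[OF m]] by (simp add: algebra_simps)
  then have "Min (range \<pi>) * \<bar>f y * f z\<bar> \<le> inner_pi \<pi> f f"
    using square[of y] square[of z] by linarith
  then show ?thesis
    using m by (simp add: pos_le_divide_eq mult.commute)
qed

lemma inner_pi_kapply_bounded: "\<exists>C. \<forall>f. \<bar>inner_pi \<pi> f (kapply K f)\<bar> \<le> C * inner_pi \<pi> f f"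
proof (intro exI allI)
  fix f
  define C where "C = (\<Sum>x\<in>UNIV. \<Sum>y\<in>UNIV. \<bar>K x y\<bar> * \<pi> x)"
  have "\<bar>inner_pi \<pi> f (kapply K f)\<bar> = \<bar>\<Sum>x\<in>UNIV. \<Sum>y\<in>UNIV. (f x * f y) * (K x y * \<pi> x)\<bar>"
    unfolding inner_pi_def kapply_def by (simp add: sum_distrib_left sum_distrib_right algebra_simps)
  also have "\<dots> \<le> (\<Sum>x\<in>UNIV. \<Sum>y\<in>UNIV. \<bar>f x * f y\<bar> * (\<bar>K x y\<bar> * \<pi> x))"
    using pi_pos by (intro order_trans[OF sum_abs] sum_mono order_trans[OF sum_abs])
      (simp add: abs_mult less_imp_le)
  also have "\<dots> \<le> (\<Sum>x\<in>UNIV. \<Sum>y\<in>UNIV. inner_pi \<pi> f f / Min (range \<pi>) * (\<bar>K x y\<bar> * \<pi> x))"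
    using pi_pos by (intro sum_mono mult_right_mono abs_mult_le_inner_pi) (simp add: less_imp_le)
  also have "\<dots> = C / Min (range \<pi>) * inner_pi \<pi> f f"
    unfolding C_def by (simp add: sum_distrib_left sum_distrib_right sum_divide_distrib algebra_simps)
  finally show "\<bar>inner_pi \<pi> f (kapply K f)\<bar> \<le> C / Min (range \<pi>) * inner_pi \<pi> f f" .
qed

lemma norm_pi_kapply_bounded: "\<exists>C. \<forall>f. norm_pi \<pi> (kapply K f) \<le> C * norm_pi \<pi> f"
proof -
  define K_adj where "K_adj = (\<lambda>x y. \<pi> y * K y x / \<pi> x)"
  obtain C where C: "\<And>f. \<bar>inner_pi \<pi> f (kapply (kmul K_adj K) f)\<bar> \<le> C * inner_pi \<pi> f f"
    using inner_pi_kapply_bounded by blast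
  have "inner_pi \<pi> (kapply K f) (kapply K f) \<le> max C 0 * inner_pi \<pi> f f" for f
  proof -
    have "inner_pi \<pi> (kapply K f) (kapply K f) = inner_pi \<pi> f (kapply (kmul K_adj K) f)"
      unfolding K_adj_def kapply_kmul by (rule inner_pi_kapply_adjoint)
    also have "\<dots> \<le> C * inner_pi \<pi> f f"
      using C[of f] by linarith
    also have "\<dots> \<le> max C 0 * inner_pi \<pi> f f"
      using inner_pi_self_nonneg by (intro mult_right_mono) auto
    finally show ?thesis .
  qed
  then have "norm_pi \<pi> (kapply K f) \<le> sqrt (max C 0) * norm_pi \<pi> f" for f
    unfolding norm_pi_def by (simp add: real_sqrt_mult[symmetric])
  then show ?thesis
    by blast
qed

lemma rho_nonneg: "0 \<le> rho \<pi> K"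
proof -
  obtain C where "\<And>f. \<bar>inner_pi \<pi> f (kapply K f)\<bar> \<le> C * inner_pi \<pi> f f"
    using inner_pi_kapply_bounded by blast
  then show ?thesis
    unfolding rho_def using inner_pi_self_pos by (intro cSup_ratio_nonneg) auto
qed

lemma rho_upper:
  assumes "f \<in> l2_0 \<pi>"
  shows "\<bar>inner_pi \<pi> f (kapply K f)\<bar> \<le> rho \<pi> K * inner_pi \<pi> f f"
proof (cases "f = (\<lambda>_. 0)")
  case False
  obtain C where "\<And>f. \<bar>inner_pi \<pi> f (kapply K f)\<bar> \<le> C * inner_pi \<pi> f f"
    using inner_pi_kapply_bounded by blast
  then show ?thesis
    unfolding rho_def using assms False inner_pi_self_pos by (intro cSup_ratio_upper) auto
qed (simp add: inner_pi_def kapply_def)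

lemma rho_least:
  assumes "\<And>f. f \<in> l2_0 \<pi> \<Longrightarrow> \<bar>inner_pi \<pi> f (kapply K f)\<bar> \<le> r * inner_pi \<pi> f f" and "0 \<le> r"
  shows "rho \<pi> K \<le> r"
  unfolding rho_def using assms inner_pi_self_pos by (intro cSup_ratio_least) auto

lemma opnorm_l2_0_nonneg: "0 \<le> opnorm_l2_0 \<pi> K"
proof -
  obtain C where "\<And>f. norm_pi \<pi> (kapply K f) \<le> C * norm_pi \<pi> f"
    using norm_pi_kapply_bounded by blast
  then show ?thesis
    unfolding opnorm_l2_0_def norm_pi_def using inner_pi_self_pos
    by (intro cSup_ratio_nonneg) (auto simp: norm_pi_def)
qed

lemma norm_pi_kapply_le_opnorm:
  assumes "f \<in> l2_0 \<pi>"
  shows "norm_pi \<pi> (kapply K f) \<le> opnorm_l2_0 \<pi> K * norm_pi \<pi> f"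
proof (cases "f = (\<lambda>_. 0)")
  case False
  obtain C where "\<And>f. norm_pi \<pi> (kapply K f) \<le> C * norm_pi \<pi> f"
    using norm_pi_kapply_bounded by blast
  then show ?thesis
    unfolding opnorm_l2_0_def norm_pi_def using assms False inner_pi_self_pos
    by (intro cSup_ratio_upper) (auto simp: norm_pi_def)
qed (simp add: norm_pi_def inner_pi_def kapply_def)

lemma reversible_abs_inner_pi_kapply_le_rho_sum:
  assumes "reversible \<pi> K" and "f \<in> l2_0 \<pi>" and "g \<in> l2_0 \<pi>"
  shows "2 * \<bar>inner_pi \<pi> f (kapply K g)\<bar> \<le> rho \<pi> K * (inner_pi \<pi> f f + inner_pi \<pi> g g)"
proof -
  have "4 * \<bar>inner_pi \<pi> f (kapply K g)\<bar>
      \<le> rho \<pi> K * inner_pi \<pi> (\<lambda>x. f x + g x) (\<lambda>x. f x + g x)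
       + rho \<pi> K * inner_pi \<pi> (\<lambda>x. f x - g x) (\<lambda>x. f x - g x)"
    using reversible_inner_pi_polarization[OF assms(1), of f g]
      rho_upper[OF l2_0_add[OF assms(2,3)], of K] rho_upper[OF l2_0_diff[OF assms(2,3)], of K]
    by linarith
  also have "\<dots> = 2 * (rho \<pi> K * (inner_pi \<pi> f f + inner_pi \<pi> g g))"
    by (simp only: distrib_left[symmetric] inner_pi_parallelogram mult.left_commute)
  finally show ?thesis
    by simp
qed

lemma reversible_abs_inner_pi_kapply_le_rho:
  assumes "reversible \<pi> K" and "f \<in> l2_0 \<pi>" and "g \<in> l2_0 \<pi>"
  shows "\<bar>inner_pi \<pi> f (kapply K g)\<bar> \<le> rho \<pi> K * norm_pi \<pi> f * norm_pi \<pi> g"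
proof -
  define a b where "a = norm_pi \<pi> f" and "b = norm_pi \<pi> g"
  show ?thesis
  proof (cases "a = 0 \<or> b = 0")
    case True
    then have "inner_pi \<pi> f f = 0 \<or> inner_pi \<pi> g g = 0"
      by (simp add: a_def b_def norm_pi_def)
    then have "f = (\<lambda>_. 0) \<or> g = (\<lambda>_. 0)"
      by (simp add: inner_pi_self_eq_0_iff)
    then show ?thesis
      by (auto simp: inner_pi_def kapply_def norm_pi_def)
  next
    case False
    then have a: "0 < a" and b: "0 < b"
      using norm_pi_nonneg[of f] norm_pi_nonneg[of g] unfolding a_def b_def by (simp_all add: less_le)
    have aa: "a * a = inner_pi \<pi> f f" and bb: "b * b = inner_pi \<pi> g g"
      unfolding a_def b_def by (rule norm_pi_mult_self)+
    \<comment> \<open>rescale f and g to equal norms before applying the sum bound\<close>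
    have "2 * \<bar>inner_pi \<pi> (\<lambda>x. b * f x) (kapply K (\<lambda>x. a * g x))\<bar>
        \<le> rho \<pi> K * (inner_pi \<pi> (\<lambda>x. b * f x) (\<lambda>x. b * f x) + inner_pi \<pi> (\<lambda>x. a * g x) (\<lambda>x. a * g x))"
      using assms by (intro reversible_abs_inner_pi_kapply_le_rho_sum l2_0_scale)
    also have "inner_pi \<pi> (\<lambda>x. b * f x) (\<lambda>x. b * f x) + inner_pi \<pi> (\<lambda>x. a * g x) (\<lambda>x. a * g x)
        = 2 * (a * b) * (a * b)"
      by (simp add: inner_pi_scale_left inner_pi_scale_right flip: aa bb)
    also have "inner_pi \<pi> (\<lambda>x. b * f x) (kapply K (\<lambda>x. a * g x)) = (a * b) * inner_pi \<pi> f (kapply K g)"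
      by (simp add: kapply_scale inner_pi_scale_left inner_pi_scale_right)
    finally have "(a * b) * (2 * \<bar>inner_pi \<pi> f (kapply K g)\<bar>) \<le> (a * b) * (2 * (rho \<pi> K * a * b))"
      using a b by (simp add: abs_mult algebra_simps)
    then show ?thesis
      using a b unfolding a_def b_def by simp
  qed
qed

lemma reversible_abs_inner_pi_kapply_add_le:
  assumes "reversible \<pi> K" and "f \<in> l2_0 \<pi>" and "g \<in> l2_0 \<pi>"
  shows "\<bar>inner_pi \<pi> (\<lambda>x. f x + g x) (kapply K (\<lambda>x. f x + g x))\<bar>
    \<le> \<bar>inner_pi \<pi> f (kapply K f)\<bar>
      + rho \<pi> K * (2 * (norm_pi \<pi> f * norm_pi \<pi> g) + norm_pi \<pi> g * norm_pi \<pi> g)"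
proof -
  define R a b where "R = rho \<pi> K" and "a = norm_pi \<pi> f" and "b = norm_pi \<pi> g"
  have "\<bar>inner_pi \<pi> f (kapply K g)\<bar> \<le> R * a * b"
    using reversible_abs_inner_pi_kapply_le_rho[OF assms] unfolding R_def a_def b_def .
  moreover have "\<bar>inner_pi \<pi> g (kapply K f)\<bar> \<le> R * a * b"
    using reversible_abs_inner_pi_kapply_le_rho[OF assms(1,3,2)] unfolding R_def a_def b_def
    by (simp add: mult_ac)
  moreover have "\<bar>inner_pi \<pi> g (kapply K g)\<bar> \<le> R * b * b"
    using reversible_abs_inner_pi_kapply_le_rho[OF assms(1,3,3)] unfolding R_def b_def .
  moreover have "inner_pi \<pi> (\<lambda>x. f x + g x) (kapply K (\<lambda>x. f x + g x))
      = inner_pi \<pi> f (kapply K f) + inner_pi \<pi> f (kapply K g)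
        + inner_pi \<pi> g (kapply K f) + inner_pi \<pi> g (kapply K g)"
    by (simp add: kapply_add inner_pi_add_left inner_pi_add_right)
  moreover have "R * (2 * (a * b) + b * b) = R * a * b + R * a * b + R * b * b"
    by (simp add: algebra_simps)
  ultimately show ?thesis
    unfolding R_def[symmetric] a_def[symmetric] b_def[symmetric] by linarith
qed

lemma reversible_idem_inner_pi_kapply_le:
  assumes "reversible \<pi> G" and "kmul G G = G"
  shows "inner_pi \<pi> (kapply G f) (kapply G f) \<le> inner_pi \<pi> f f"
proof -
  have "kapply G (kapply G f) = kapply G f"
    using assms(2) by (simp flip: kapply_kmul)
  then have proj: "inner_pi \<pi> (kapply G f) (kapply G f) = inner_pi \<pi> f (kapply G f)"
    using reversible_inner_pi_kapply[OF assms(1), of f "kapply G f"] by simp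
  have "0 \<le> inner_pi \<pi> (\<lambda>x. f x - kapply G f x) (\<lambda>x. f x - kapply G f x)"
    by (rule inner_pi_self_nonneg)
  also have "\<dots> = inner_pi \<pi> f f - inner_pi \<pi> (kapply G f) (kapply G f)"
    using proj inner_pi_commute[of \<pi> f "kapply G f"] by (simp add: inner_pi_diff_left inner_pi_diff_right)
  finally show ?thesis
    by simp
qed

lemma rho_sandwich_gibbs_le_mh:
  assumes "reversible \<pi> G" and "\<And>x. (\<Sum>y\<in>UNIV. G x y) = 1" and "kmul G G = G"
    and "reversible \<pi> M" and "kmul M G = G"
  shows "rho \<pi> (kmul (kmul G P) G) \<le> rho \<pi> (kmul (kmul M P) M)"
proof (rule rho_least[OF _ rho_nonneg])
  fix f
  assume f: "f \<in> l2_0 \<pi>"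
  define g where "g = kapply G f"
  have "kapply M g = g"
    unfolding g_def using assms(5) by (simp flip: kapply_kmul)
  then have "inner_pi \<pi> f (kapply (kmul (kmul G P) G) f) = inner_pi \<pi> g (kapply (kmul (kmul M P) M) g)"
    unfolding g_def reversible_inner_pi_sandwich[OF assms(1)] reversible_inner_pi_sandwich[OF assms(4)]
    by simp
  also have "\<bar>\<dots>\<bar> \<le> rho \<pi> (kmul (kmul M P) M) * inner_pi \<pi> g g"
    unfolding g_def by (rule rho_upper[OF reversible_kapply_l2_0[OF assms(1,2) f]])
  also have "\<dots> \<le> rho \<pi> (kmul (kmul M P) M) * inner_pi \<pi> f f"
    unfolding g_def
    by (intro mult_left_mono reversible_idem_inner_pi_kapply_le[OF assms(1,3)] rho_nonneg)
  finally show "\<bar>inner_pi \<pi> f (kapply (kmul (kmul G P) G) f)\<bar> \<le> rho \<pi> (kmul (kmul M P) M) * inner_pi \<pi> f f" .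
qed

lemma rho_sandwich_mh_le_gibbs:
  assumes "reversible \<pi> P"
    and "reversible \<pi> G" and "\<And>x. (\<Sum>y\<in>UNIV. G x y) = 1" and "kmul G G = G"
    and "reversible \<pi> M" and "\<And>x. (\<Sum>y\<in>UNIV. M x y) = 1"
  defines "\<theta> \<equiv> opnorm_l2_0 \<pi> (\<lambda>x y. M x y - G x y)"
  shows "rho \<pi> (kmul (kmul M P) M) \<le> rho \<pi> (kmul (kmul G P) G) + rho \<pi> P * (2 * \<theta> + \<theta>^2)"
proof (rule rho_least)
  have "0 \<le> \<theta>"
    unfolding \<theta>_def by (rule opnorm_l2_0_nonneg)
  then show "0 \<le> rho \<pi> (kmul (kmul G P) G) + rho \<pi> P * (2 * \<theta> + \<theta>^2)"
    using rho_nonneg by simp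
next
  fix f
  assume f: "f \<in> l2_0 \<pi>"
  define g d where "g = kapply G f" and "d = kapply (\<lambda>x y. M x y - G x y) f"
  define nf ng nd where "nf = norm_pi \<pi> f" and "ng = norm_pi \<pi> g" and "nd = norm_pi \<pi> d"
  have Mf: "kapply M f = (\<lambda>x. g x + d x)"
    unfolding g_def d_def kapply_kernel_diff by simp
  have g: "g \<in> l2_0 \<pi>"
    unfolding g_def by (rule reversible_kapply_l2_0[OF assms(2,3) f])
  have d: "d \<in> l2_0 \<pi>"
    unfolding d_def kapply_kernel_diff
    by (intro l2_0_diff reversible_kapply_l2_0[OF assms(5,6) f] reversible_kapply_l2_0[OF assms(2,3) f])
  have "ng \<le> nf"
    unfolding ng_def nf_def g_def norm_pi_def
    by (rule real_sqrt_le_mono[OF reversible_idem_inner_pi_kapply_le[OF assms(2,4)]])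
  moreover have "nd \<le> \<theta> * nf"
    unfolding nd_def nf_def d_def \<theta>_def by (rule norm_pi_kapply_le_opnorm[OF f])
  ultimately have "2 * (ng * nd) + nd * nd \<le> (2 * \<theta> + \<theta>^2) * (nf * nf)"
    unfolding ng_def nd_def \<theta>_def
    by (intro two_mult_add_square_le norm_pi_nonneg opnorm_l2_0_nonneg)
  then have errors: "rho \<pi> P * (2 * (ng * nd) + nd * nd) \<le> rho \<pi> P * (2 * \<theta> + \<theta>^2) * inner_pi \<pi> f f"
    using mult_left_mono[OF _ rho_nonneg] unfolding nf_def norm_pi_mult_self by (simp add: mult.assoc)
  have main: "\<bar>inner_pi \<pi> g (kapply P g)\<bar> \<le> rho \<pi> (kmul (kmul G P) G) * inner_pi \<pi> f f"
    using rho_upper[OF f, of "kmul (kmul G P) G"]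
    unfolding reversible_inner_pi_sandwich[OF assms(2)] g_def .
  have "\<bar>inner_pi \<pi> f (kapply (kmul (kmul M P) M) f)\<bar>
      \<le> \<bar>inner_pi \<pi> g (kapply P g)\<bar> + rho \<pi> P * (2 * (ng * nd) + nd * nd)"
    unfolding reversible_inner_pi_sandwich[OF assms(5)] Mf ng_def nd_def
    by (rule reversible_abs_inner_pi_kapply_add_le[OF assms(1) g d])
  also have "\<dots> \<le> (rho \<pi> (kmul (kmul G P) G) + rho \<pi> P * (2 * \<theta> + \<theta>^2)) * inner_pi \<pi> f f"
    using main errors by (simp add: distrib_right)
  finally show "\<bar>inner_pi \<pi> f (kapply (kmul (kmul M P) M) f)\<bar>
      \<le> (rho \<pi> (kmul (kmul G P) G) + rho \<pi> P * (2 * \<theta> + \<theta>^2)) * inner_pi \<pi> f f" .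
qed

end

theorem proposition3p5:
  fixes \<pi> :: "'x::finite \<Rightarrow> real" and P :: "'x \<Rightarrow> 'x \<Rightarrow> real"
    and \<G> :: "('g, 'm) monoid_scheme" and \<phi> :: "'g \<Rightarrow> 'x \<Rightarrow> 'x"
  assumes "pmf_full \<pi>"
    and "stochastic P" and "reversible \<pi> P" and "ergodic P"
    and "group_action \<G> UNIV \<phi>"
  defines "Gk \<equiv> gibbs_kernel \<pi> (orbit \<G> \<phi>)"
    and "Mk \<equiv> mh_kernel \<pi> (orbit \<G> \<phi>)"
  defines "\<theta> \<equiv> opnorm_l2_0 \<pi> (\<lambda>x y. Mk x y - Gk x y)"
  shows "0 \<le> rho \<pi> (kmul (kmul Mk P) Mk) - rho \<pi> (kmul (kmul Gk P) Gk)
       \<and> rho \<pi> (kmul (kmul Mk P) Mk) - rho \<pi> (kmul (kmul Gk P) Gk) \<le> rho \<pi> P * (2 * \<theta> + \<theta>^2)"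
proof -
  have pi_pos: "\<And>x. 0 < \<pi> x"
    using assms(1) unfolding pmf_full_def by blast
  interpret orbit_kernels \<pi> "orbit \<G> \<phi>"
    by (rule orbit_kernels_group_action[OF assms(5) pi_pos])
  have "rho \<pi> (kmul (kmul Gk P) Gk) \<le> rho \<pi> (kmul (kmul Mk P) Mk)"
    unfolding Gk_def Mk_def
    by (rule rho_sandwich_gibbs_le_mh[OF pi_pos reversible_gibbs_kernel gibbs_kernel_row_sum
          gibbs_kernel_idem reversible_mh_kernel kmul_mh_gibbs_kernel])
  moreover have "rho \<pi> (kmul (kmul Mk P) Mk) \<le> rho \<pi> (kmul (kmul Gk P) Gk) + rho \<pi> P * (2 * \<theta> + \<theta>^2)"
    unfolding Gk_def Mk_def \<theta>_def
    by (rule rho_sandwich_mh_le_gibbs[OF pi_pos assms(3) reversible_gibbs_kernel gibbs_kernel_row_sum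
          gibbs_kernel_idem reversible_mh_kernel mh_kernel_row_sum])
  ultimately show ?thesis
    by simp
qed

end
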